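(* Let integers $r\ge1$, $n_i\ge1$, $l_{ij}\ge1$, $d_{ij}$ be as in the context. (i) For $0\le i\le r$ and $1\le j,j'\le n_i$ there exist integers $\alpha,\beta$ with $\nu(i,j,j')=\alpha\,\hat\nu(i,j)-\beta\,\hat\nu(i,j')$. (ii) For $0\le i_0\le r$ and $1\le j_i\le n_i$ ($i=0,\dots,r$) there exist integers $\beta_0,\dots,\beta_r$ with \[ \mu(j_0,\dots,j_r)=\beta_{i_0}\,\mu(j_0,\dots,j_{i_0-1},n_{i_0},j_{i_0+1},\dots,j_r)+\sum_{i_1\ne i_0}\beta_{i_1}\,\hat\nu(i_0,j_{i_0})\prod_{i\notin\{i_0,i_1\}}l_{ij_i}. \]
   Context: Integers $r\ge1$, $n_0,\dots,n_r\ge1$, $l_{ij}\in\mathbb{Z}_{\ge1}$, $d_{ij}\in\mathbb{Z}$ ($0\le i\le r$, $1\le j\le n_i$) with $\gcd(l_{ij},d_{ij})=1$ and $d_{i1}/l_{i1}>\dots>d_{in_i}/l_{in_i}$. Define $\mu(j_0,\dots,j_r)=\sum_{i_0=0}^r d_{i_0j_{i_0}}\prod_{i\ne i_0}l_{ij_i}$, $\nu(i,j,j')=l_{ij}d_{ij'}-l_{ij'}d_{ij}$ and $\hat\nu(i,j)=\nu(i,j,n_i)$. *)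

theory Defs
  imports Complex_Main
begin

text \<open>Data: l i j = l_{ij}, d i j = d_{ij}, indices i in {0..r}, j in {1..n i}.
  A tuple (j_0,...,j_r) is a function js :: nat => nat (only values on {0..r} matter).\<close>

definition mu :: "nat \<Rightarrow> (nat \<Rightarrow> nat \<Rightarrow> int) \<Rightarrow> (nat \<Rightarrow> nat \<Rightarrow> int) \<Rightarrow> (nat \<Rightarrow> nat) \<Rightarrow> int" where
  "mu r l d js = (\<Sum>i0\<in>{0..r}. d i0 (js i0) * (\<Prod>i\<in>{0..r} - {i0}. l i (js i)))"

definition nu :: "(nat \<Rightarrow> nat \<Rightarrow> int) \<Rightarrow> (nat \<Rightarrow> nat \<Rightarrow> int) \<Rightarrow> nat \<Rightarrow> nat \<Rightarrow> nat \<Rightarrow> int" where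
  "nu l d i j j' = l i j * d i j' - l i j' * d i j"

definition nuhat :: "(nat \<Rightarrow> nat) \<Rightarrow> (nat \<Rightarrow> nat \<Rightarrow> int) \<Rightarrow> (nat \<Rightarrow> nat \<Rightarrow> int) \<Rightarrow> nat \<Rightarrow> nat \<Rightarrow> int" where
  "nuhat n l d i j = nu l d i j (n i)"

end

theory Submission
  imports Defs
begin

text \<open>Fix \<open>i\<close> and write \<open>(A, B) = (l\<^sub>i\<^sub>n\<^sub>i, d\<^sub>i\<^sub>n\<^sub>i)\<close>; only the coprimality of this pair is
  needed, via a Bezout relation \<open>u A + v B = 1\<close>. Both \<open>\<nu>(i, j, j')\<close> and, as a function of its
  \<open>i\<close>-th coordinate, \<open>\<mu>\<close> have the shape \<open>b P + a S\<close> in the pair \<open>(a, b) = (l\<^sub>i\<^sub>j, d\<^sub>i\<^sub>j)\<close>.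
  Multiplying by \<open>u A + v B\<close> rewrites such a form as a multiple of its value at \<open>(A, B)\<close> plus
  \<open>a B - A b\<close>, i.e. \<open>\<nu>\<close>-hat\<open>(i, j)\<close>, times \<open>v S - u P\<close>, and for \<open>\<mu>\<close> the factor \<open>v S - u P\<close> is again a
  combination of the partial products \<open>\<Prod>\<^bsub>i \<notin> {i\<^sub>0, i\<^sub>1}\<^esub> l\<^sub>i\<^sub>j\<^sub>i\<close>.\<close>

lemma bezout_linear_form_decomp:
  fixes a b A B P S u v :: "'a::comm_ring_1"
  assumes "u * A + v * B = 1"
  shows "b * P + a * S = (u * a + v * b) * (B * P + A * S) + (a * B - A * b) * (v * S - u * P)"
proof -
  have "b * P + a * S = (u * A + v * B) * (b * P + a * S)"
    using assms by simp
  also have "\<dots> = (u * a + v * b) * (B * P + A * S) + (a * B - A * b) * (v * S - u * P)"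
    by (simp add: algebra_simps)
  finally show ?thesis .
qed

lemma nu_bezout:
  assumes "gcd (l i N) (d i N) = 1"
  shows "\<exists>\<alpha> \<beta>. nu l d i j j' = \<alpha> * nu l d i j N - \<beta> * nu l d i j' N"
proof -
  obtain u v where uv: "u * l i N + v * d i N = 1"
    using bezout_int[of "l i N" "d i N"] assms by auto
  have "nu l d i j j' = (u * l i j' + v * d i j') * nu l d i j N
      - (u * l i j + v * d i j) * nu l d i j' N"
    using bezout_linear_form_decomp[OF uv, of "d i j" "- l i j'" "l i j" "d i j'"]
    by (simp add: nu_def algebra_simps)
  then show ?thesis by blast
qed

lemma mu_fun_upd:
  assumes "i0 \<le> r"
  shows "mu r l d (js(i0 := x)) = d i0 x * (\<Prod>i\<in>{0..r} - {i0}. l i (js i))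
    + l i0 x * (\<Sum>i1\<in>{0..r} - {i0}. d i1 (js i1) * (\<Prod>i\<in>{0..r} - {i0, i1}. l i (js i)))"
proof -
  let ?js = "js(i0 := x)"
  have "mu r l d ?js = d i0 x * (\<Prod>i\<in>{0..r} - {i0}. l i (?js i))
      + (\<Sum>i1\<in>{0..r} - {i0}. d i1 (?js i1) * (\<Prod>i\<in>{0..r} - {i1}. l i (?js i)))"
    unfolding mu_def using assms by (subst sum.remove [of _ i0]) simp_all
  also have "(\<Prod>i\<in>{0..r} - {i0}. l i (?js i)) = (\<Prod>i\<in>{0..r} - {i0}. l i (js i))"
    by (rule prod.cong) auto
  also have "(\<Sum>i1\<in>{0..r} - {i0}. d i1 (?js i1) * (\<Prod>i\<in>{0..r} - {i1}. l i (?js i)))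
      = (\<Sum>i1\<in>{0..r} - {i0}. l i0 x * (d i1 (js i1) * (\<Prod>i\<in>{0..r} - {i0, i1}. l i (js i))))"
  proof (rule sum.cong [OF refl])
    fix i1
    assume i1: "i1 \<in> {0..r} - {i0}"
    have decomp: "{0..r} - {i1} = insert i0 ({0..r} - {i0, i1})"
      using i1 assms by auto
    have "(\<Prod>i\<in>{0..r} - {i1}. l i (?js i)) = l i0 x * (\<Prod>i\<in>{0..r} - {i0, i1}. l i (?js i))"
      by (subst decomp) simp
    also have "(\<Prod>i\<in>{0..r} - {i0, i1}. l i (?js i)) = (\<Prod>i\<in>{0..r} - {i0, i1}. l i (js i))"
      by (rule prod.cong) auto
    finally show "d i1 (?js i1) * (\<Prod>i\<in>{0..r} - {i1}. l i (?js i))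
        = l i0 x * (d i1 (js i1) * (\<Prod>i\<in>{0..r} - {i0, i1}. l i (js i)))"
      using i1 by simp
  qed
  finally show ?thesis
    by (simp only: sum_distrib_left)
qed

lemma mu_bezout:
  assumes "1 \<le> r" and "i0 \<le> r" and "gcd (l i0 N) (d i0 N) = 1"
  shows "\<exists>\<beta>. mu r l d js = \<beta> i0 * mu r l d (js(i0 := N))
    + (\<Sum>i1\<in>{0..r} - {i0}. \<beta> i1 * nu l d i0 (js i0) N * (\<Prod>i\<in>{0..r} - {i0, i1}. l i (js i)))"
proof -
  define I where "I = {0..r} - {i0}"
  define Q where "Q i1 = (\<Prod>i\<in>{0..r} - {i0, i1}. l i (js i))" for i1
  define P where "P = (\<Prod>i\<in>I. l i (js i))"
  define S where "S = (\<Sum>i1\<in>I. d i1 (js i1) * Q i1)"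
  obtain u v where uv: "u * l i0 N + v * d i0 N = 1"
    using bezout_int[of "l i0 N" "d i0 N"] assms(3) by auto
  obtain k where k: "k \<in> I"
    using assms(1) by (cases "i0 = 0") (auto simp: I_def)
  have P_eq: "P = l k (js k) * Q k"
  proof -
    have "I = insert k ({0..r} - {i0, k})"
      using k by (auto simp: I_def)
    then show ?thesis
      by (simp add: P_def Q_def)
  qed
  have mu_at: "mu r l d (js(i0 := x)) = d i0 x * P + l i0 x * S" for x
    using mu_fun_upd[OF assms(2)] by (simp add: P_def S_def Q_def I_def)
  \<comment> \<open>\<open>-u P\<close> is absorbed into the \<open>k\<close>-th coefficient via \<open>P = l\<^sub>k Q\<^sub>k\<close>; this is where \<open>r \<ge> 1\<close> enters.\<close>
  define \<beta> where "\<beta> i1 = (if i1 = i0 then u * l i0 (js i0) + v * d i0 (js i0)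
      else v * d i1 (js i1) - (if i1 = k then u * l k (js k) else 0))" for i1
  have "(\<Sum>i1\<in>I. \<beta> i1 * Q i1) = v * S - u * P"
    using k by (simp add: \<beta>_def I_def S_def P_eq left_diff_distrib sum_subtractf
        sum_distrib_left mult.assoc if_distrib[of "\<lambda>t. t * _"])
  then have "mu r l d js = \<beta> i0 * mu r l d (js(i0 := N))
      + nu l d i0 (js i0) N * (\<Sum>i1\<in>I. \<beta> i1 * Q i1)"
    using bezout_linear_form_decomp[OF uv, of "d i0 (js i0)" P "l i0 (js i0)" S]
      mu_at[of N] mu_at[of "js i0"]
    by (simp add: \<beta>_def nu_def)
  then show ?thesis
    by (intro exI[of _ \<beta>]) (simp add: sum_distrib_left I_def Q_def algebra_simps)
qed

theorem lemma4p9: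
  fixes r :: nat and n :: "nat \<Rightarrow> nat" and l d :: "nat \<Rightarrow> nat \<Rightarrow> int"
  assumes hr: "r \<ge> 1"
    and hn: "\<And>i. i \<le> r \<Longrightarrow> n i \<ge> 1"
    and hl: "\<And>i j. i \<le> r \<Longrightarrow> 1 \<le> j \<Longrightarrow> j \<le> n i \<Longrightarrow> l i j \<ge> 1"
    and hgcd: "\<And>i j. i \<le> r \<Longrightarrow> 1 \<le> j \<Longrightarrow> j \<le> n i \<Longrightarrow> gcd (l i j) (d i j) = 1"
    and hdec: "\<And>i j j'. i \<le> r \<Longrightarrow> 1 \<le> j \<Longrightarrow> j < j' \<Longrightarrow> j' \<le> n i \<Longrightarrow>
               (of_int (d i j) / of_int (l i j) :: rat) > of_int (d i j') / of_int (l i j')"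
  shows "(\<forall>i j j'. i \<le> r \<and> 1 \<le> j \<and> j \<le> n i \<and> 1 \<le> j' \<and> j' \<le> n i \<longrightarrow>
            (\<exists>\<alpha> \<beta> :: int. nu l d i j j' = \<alpha> * nuhat n l d i j - \<beta> * nuhat n l d i j'))
       \<and> (\<forall>i0 js. i0 \<le> r \<and> (\<forall>i\<le>r. 1 \<le> js i \<and> js i \<le> n i) \<longrightarrow>
            (\<exists>\<beta> :: nat \<Rightarrow> int.
               mu r l d js = \<beta> i0 * mu r l d (js(i0 := n i0))
                 + (\<Sum>i1\<in>{0..r} - {i0}. \<beta> i1 * nuhat n l d i0 (js i0)
                      * (\<Prod>i\<in>{0..r} - {i0, i1}. l i (js i)))))"
proof (intro conjI allI impI)
  fix i j j'
  assume "i \<le> r \<and> 1 \<le> j \<and> j \<le> n i \<and> 1 \<le> j' \<and> j' \<le> n i"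
  then have "gcd (l i (n i)) (d i (n i)) = 1"
    using hn hgcd by simp
  then show "\<exists>\<alpha> \<beta>. nu l d i j j' = \<alpha> * nuhat n l d i j - \<beta> * nuhat n l d i j'"
    unfolding nuhat_def by (rule nu_bezout)
next
  fix i0 js
  assume "i0 \<le> r \<and> (\<forall>i\<le>r. 1 \<le> js i \<and> js i \<le> n i)"
  then have "i0 \<le> r" and "gcd (l i0 (n i0)) (d i0 (n i0)) = 1"
    using hn hgcd by simp_all
  then show "\<exists>\<beta>. mu r l d js = \<beta> i0 * mu r l d (js(i0 := n i0))
      + (\<Sum>i1\<in>{0..r} - {i0}. \<beta> i1 * nuhat n l d i0 (js i0) * (\<Prod>i\<in>{0..r} - {i0, i1}. l i (js i)))"
    unfolding nuhat_def by (rule mu_bezout[OF hr])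
qed

end
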